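(* Let $I\subseteq\mathbb{R}$ be an interval, let $f:I\to\mathbb{R}$ be differentiable on the interior $I^\circ$ of $I$, and let $a,b\in I$ with $a<b$ and $f'\in L^1[a,b]$. Let $s\in(0,1]$, $\alpha\in[0,1]$, $m\in(0,1]$, and assume $b/m\in I^\circ$. If $|f'|$ is $s$-$(\alpha,m)$-convex (in the first sense) on $[a,b]$, then $$\left|\frac{f(a)+f(b)}{2}-\frac{1}{b-a}\int_a^b f(x)\,dx\right|\le \frac{b-a}{2}\left[v_1|f'(a)|+v_2\left|f'\!\left(\frac{b}{m}\right)\right|\right],$$ where $v_1=\dfrac{1+2^{\alpha s}(\alpha s)}{2^{\alpha s}(\alpha s+1)(\alpha s+2)}$ and $v_2=m\left(\frac12-v_1\right)$.
   Context: Let $s\in(0,1]$, $\alpha\in[0,1]$, $m\in(0,1]$. A nonnegative function $g$ is called $s$-$(\alpha,m)$-convex (in the first sense) on $[a,b]$ if for all $x,y\in[a,b]$ (with $y/m$ in the domain of $g$) and all $t\in[0,1]$, $$g(tx+(1-t)y)\le t^{\alpha s}g(x)+m\,(1-t^{\alpha s})\,g\!\left(\frac{y}{m}\right).$$ *)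

theory Defs
  imports "HOL-Analysis.Analysis"
begin

text \<open>Real power t to the e, with the mathematical convention t to the 0 equal to 1 (also at t = 0).\<close>
definition rpow :: "real \<Rightarrow> real \<Rightarrow> real" where
  "rpow t e = (if e = 0 then 1 else t powr e)"

text \<open>g is s-(alpha,m)-convex (first sense) on S, where D is the domain of g
  (the condition is required for those y with y/m in D).\<close>
definition s_alpha_m_convex ::
  "real \<Rightarrow> real \<Rightarrow> real \<Rightarrow> real set \<Rightarrow> real set \<Rightarrow> (real \<Rightarrow> real) \<Rightarrow> bool" where
  "s_alpha_m_convex s \<alpha> m D S g \<longleftrightarrow>
     (\<forall>x\<in>S. 0 \<le> g x) \<and>
     (\<forall>x\<in>S. \<forall>y\<in>S. y / m \<in> D \<longrightarrow> (\<forall>t\<in>{0..1}.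
        g (t * x + (1 - t) * y) \<le> rpow t (\<alpha> * s) * g x + m * (1 - rpow t (\<alpha> * s)) * g (y / m)))"

end

theory Submission
  imports Defs
begin

text \<open>Integration by parts turns \<open>(b - a)\<close> times the trapezoid error into
  \<open>\<integral>\<^sub>a\<^sup>b (x - (a + b)/2) f'(x) dx\<close>. Writing \<open>x = t a + (1 - t) b\<close>, convexity bounds
  \<open>\<bar>f'(x)\<bar>\<close> by \<open>t\<^sup>\<alpha>\<^sup>s \<bar>f'(a)\<bar> + m (1 - t\<^sup>\<alpha>\<^sup>s) \<bar>f'(b/m)\<bar>\<close>, and the resulting weighted
  integral is explicit: \<open>\<integral>\<^sub>0\<^sup>1 \<bar>1/2 - t\<bar> t\<^sup>p dt = v\<^sub>1/2\<close> with \<open>p = \<alpha>s\<close>.\<close>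

definition trapezoid_weight :: "real \<Rightarrow> real" where
  "trapezoid_weight p = (1 + 2 powr p * p) / (2 powr p * (p + 1) * (p + 2))"

definition kernel_primitive :: "real \<Rightarrow> real \<Rightarrow> real" where
  "kernel_primitive p t = t powr (p + 1) / (2 * (p + 1)) - t powr (p + 2) / (p + 2)"

lemma kernel_primitive_has_derivative:
  assumes "0 \<le> p" "0 < t"
  shows "(kernel_primitive p has_real_derivative (1/2 - t) * t powr p) (at t)"
proof -
  have "((\<lambda>t. t powr (p + 1)) has_real_derivative (p + 1) * t powr p) (at t)"
    using has_real_derivative_powr[of t "p + 1"] assms by simp
  moreover have "((\<lambda>t. t powr (p + 2)) has_real_derivative (p + 2) * (t * t powr p)) (at t)"
    using has_real_derivative_powr[of t "p + 2"] assms by (simp add: powr_add add.commute)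
  ultimately have "(kernel_primitive p has_real_derivative
      (p + 1) * t powr p / (2 * (p + 1)) - (p + 2) * (t * t powr p) / (p + 2)) (at t)"
    unfolding kernel_primitive_def by (intro DERIV_diff DERIV_cdivide)
  moreover have "(p + 1) * t powr p / (2 * (p + 1)) - (p + 2) * (t * t powr p) / (p + 2)
      = (1/2 - t) * t powr p"
  proof -
    have "p + 1 \<noteq> 0" "p + 2 \<noteq> 0" "2 * p + 2 \<noteq> 0" using assms by auto
    then show ?thesis by (simp add: divide_simps) algebra
  qed
  ultimately show ?thesis by simp
qed

lemma continuous_on_kernel_primitive:
  assumes "0 \<le> p"
  shows "continuous_on {0..} (kernel_primitive p)"
  unfolding kernel_primitive_def using assms
  by (intro continuous_intros continuous_on_powr') auto

lemma kernel_primitive_values: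
  assumes "0 \<le> p"
  shows "2 * kernel_primitive p (1/2) - kernel_primitive p 1 - kernel_primitive p 0
    = trapezoid_weight p / 2"
proof -
  have half_powr: "(1/2::real) powr (p + 1) = 1 / (2 * 2 powr p)"
    "(1/2::real) powr (p + 2) = 1 / (4 * 2 powr p)"
    by (simp_all add: powr_add powr_divide)
  have "(2::real) powr p \<noteq> 0" "p + 1 \<noteq> 0" "p + 2 \<noteq> 0" "2 * p + 2 \<noteq> 0" "2 * p + 4 \<noteq> 0"
    using assms by auto
  then show ?thesis
    unfolding kernel_primitive_def trapezoid_weight_def half_powr
    by (simp add: divide_simps) algebra
qed

lemma kernel_has_integral:
  fixes a b p :: real
  assumes "a < b" "0 \<le> p"
  shows "((\<lambda>x. \<bar>x - (a + b) / 2\<bar> * rpow ((b - x) / (b - a)) p)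
    has_integral (b - a)^2 / 2 * trapezoid_weight p) {a..b}"
proof -
  define L where "L = b - a"
  define c where "c = (a + b) / 2"
  define \<tau> where "\<tau> x = (b - x) / L" for x
  define G where "G x = L^2 * kernel_primitive p (\<tau> x)" for x
  have L: "0 < L" using assms by (simp add: L_def)
  have ac: "a \<le> c" "c \<le> b" using assms by (auto simp: c_def)
  have G_deriv: "(G has_real_derivative - L * ((1/2 - \<tau> x) * \<tau> x powr p)) (at x)"
    if "x < b" for x
  proof -
    have "0 < \<tau> x" using that L by (simp add: \<tau>_def)
    have "((\<lambda>x. \<tau> x) has_real_derivative - 1 / L) (at x)"
      unfolding \<tau>_def using L by (auto intro!: derivative_eq_intros)
    from DERIV_chain2[OF kernel_primitive_has_derivative[OF assms(2) \<open>0 < \<tau> x\<close>] this]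
    have "(G has_real_derivative L^2 * ((1/2 - \<tau> x) * \<tau> x powr p * (- 1 / L))) (at x)"
      unfolding G_def by (rule DERIV_cmult)
    then show ?thesis using L by (simp add: power2_eq_square)
  qed
  have kernel_eq: "\<bar>x - c\<bar> * rpow ((b - x) / (b - a)) p = L * \<bar>1/2 - \<tau> x\<bar> * \<tau> x powr p"
    if "x < b" for x
  proof -
    have "x - c = L * (1/2 - \<tau> x)"
      using L unfolding \<tau>_def c_def by (simp add: field_simps) (simp add: L_def algebra_simps)
    moreover have "rpow ((b - x) / (b - a)) p = \<tau> x powr p"
      using that L by (simp add: rpow_def \<tau>_def L_def)
    ultimately show ?thesis using L by (simp add: abs_mult)
  qed
  have G_cont: "continuous_on {a..b} G"
    unfolding G_def \<tau>_def using L
    by (intro continuous_intros continuous_on_compose2[OF continuous_on_kernel_primitive[OF assms(2)]])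
      auto
  have left: "((\<lambda>x. \<bar>x - c\<bar> * rpow ((b - x) / (b - a)) p) has_integral G c - G a) {a..c}"
  proof (rule fundamental_theorem_of_calculus_interior[OF ac(1)])
    show "continuous_on {a..c} G" using G_cont ac by (auto elim: continuous_on_subset)
  next
    fix x assume x: "x \<in> {a<..<c}"
    then have "x < b" "1/2 - \<tau> x < 0" using ac L by (auto simp: \<tau>_def c_def L_def field_simps)
    then have "\<bar>x - c\<bar> * rpow ((b - x) / (b - a)) p = - L * ((1/2 - \<tau> x) * \<tau> x powr p)"
      using kernel_eq by (simp add: algebra_simps)
    with G_deriv[OF \<open>x < b\<close>]
    show "(G has_vector_derivative \<bar>x - c\<bar> * rpow ((b - x) / (b - a)) p) (at x)"
      by (simp add: has_real_derivative_iff_has_vector_derivative)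
  qed
  have right: "((\<lambda>x. \<bar>x - c\<bar> * rpow ((b - x) / (b - a)) p) has_integral - G b - - G c) {c..b}"
  proof (rule fundamental_theorem_of_calculus_interior[OF ac(2)])
    show "continuous_on {c..b} (\<lambda>x. - G x)"
      using G_cont ac by (intro continuous_intros) (auto elim: continuous_on_subset)
  next
    fix x assume x: "x \<in> {c<..<b}"
    then have "x < b" "0 < 1/2 - \<tau> x" using ac L by (auto simp: \<tau>_def c_def L_def field_simps)
    then have "\<bar>x - c\<bar> * rpow ((b - x) / (b - a)) p = - (- L * ((1/2 - \<tau> x) * \<tau> x powr p))"
      using kernel_eq by (simp add: algebra_simps)
    with DERIV_minus[OF G_deriv[OF \<open>x < b\<close>]]
    show "((\<lambda>x. - G x) has_vector_derivative \<bar>x - c\<bar> * rpow ((b - x) / (b - a)) p) (at x)"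
      by (simp add: has_real_derivative_iff_has_vector_derivative)
  qed
  have \<tau>_nodes: "\<tau> a = 1" "\<tau> c = 1/2" "\<tau> b = 0"
    using L by (simp_all add: \<tau>_def c_def L_def field_simps)
  have "G c - G a + (- G b - - G c)
      = L^2 * (2 * kernel_primitive p (1/2) - kernel_primitive p 1 - kernel_primitive p 0)"
    unfolding G_def \<tau>_nodes by (simp add: algebra_simps)
  also have "\<dots> = (b - a)^2 / 2 * trapezoid_weight p"
    unfolding kernel_primitive_values[OF assms(2)] L_def by simp
  finally have total: "G c - G a + (- G b - - G c) = (b - a)^2 / 2 * trapezoid_weight p" .
  show ?thesis
    using has_integral_combine[OF ac left right] unfolding total by (simp only: c_def)
qed

lemma convexity_bound_has_integral:
  fixes a b p A B m :: real
  assumes "a < b" "0 \<le> p"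
  shows "((\<lambda>x. \<bar>x - (a + b) / 2\<bar> *
      (rpow ((b - x) / (b - a)) p * A + m * (1 - rpow ((b - x) / (b - a)) p) * B))
    has_integral (b - a)^2 / 2 * (trapezoid_weight p * A + m * (1/2 - trapezoid_weight p) * B)) {a..b}"
proof -
  define k where "k x = \<bar>x - (a + b) / 2\<bar>" for x
  define r where "r x = rpow ((b - x) / (b - a)) p" for x
  have "((\<lambda>x. k x * r x) has_integral (b - a)^2 / 2 * trapezoid_weight p) {a..b}"
    unfolding k_def r_def by (rule kernel_has_integral[OF assms])
  moreover have "(k has_integral (b - a)^2 / 2 * (1/2)) {a..b}"
    using kernel_has_integral[OF assms(1), of 0]
    by (simp add: k_def[abs_def] rpow_def trapezoid_weight_def)
  ultimately have "((\<lambda>x. (A - m * B) * (k x * r x) + m * B * k x)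
      has_integral (A - m * B) * ((b - a)^2 / 2 * trapezoid_weight p) + m * B * ((b - a)^2 / 2 * (1/2))) {a..b}"
    by (intro has_integral_add has_integral_mult_right)
  then show ?thesis
    unfolding k_def[symmetric] r_def[symmetric] by (simp add: field_simps)
qed

lemma trapezoid_error_has_integral:
  fixes f f' :: "real \<Rightarrow> real"
  assumes "a \<le> b" and f': "\<And>x. x \<in> {a..b} \<Longrightarrow> (f has_real_derivative f' x) (at x within {a..b})"
  shows "((\<lambda>x. (x - (a + b) / 2) * f' x)
    has_integral (b - a) * ((f a + f b) / 2) - integral {a..b} f) {a..b}"
proof -
  define F where "F x = (x - (a + b) / 2) * f x - integral {a..x} f" for x
  have "continuous_on {a..b} f"
    using f' DERIV_continuous continuous_on_eq_continuous_within by blast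
  then have "(F has_real_derivative (x - (a + b) / 2) * f' x) (at x within {a..b})"
    if "x \<in> {a..b}" for x
    unfolding F_def using that f'[OF that]
    by (auto intro!: derivative_eq_intros integral_has_real_derivative)
  then have "((\<lambda>x. (x - (a + b) / 2) * f' x) has_integral F b - F a) {a..b}"
    using assms(1)
    by (intro fundamental_theorem_of_calculus) (auto simp: has_real_derivative_iff_has_vector_derivative)
  moreover have "F b - F a = (b - a) * ((f a + f b) / 2) - integral {a..b} f"
    by (simp add: F_def field_simps)
  ultimately show ?thesis by simp
qed

lemma trapezoid_error_le:
  fixes f f' w :: "real \<Rightarrow> real"
  assumes "a < b"
    and "\<And>x. x \<in> {a..b} \<Longrightarrow> (f has_real_derivative f' x) (at x within {a..b})"
    and "\<And>x. x \<in> {a..b} \<Longrightarrow> \<bar>f' x\<bar> \<le> w x"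
    and "((\<lambda>x. \<bar>x - (a + b) / 2\<bar> * w x) has_integral W) {a..b}"
  shows "\<bar>(f a + f b) / 2 - integral {a..b} f / (b - a)\<bar> \<le> W / (b - a)"
proof -
  have "(b - a) * ((f a + f b) / 2) - integral {a..b} f
      = (b - a) * ((f a + f b) / 2 - integral {a..b} f / (b - a))"
    using assms(1) by (simp add: right_diff_distrib)
  with trapezoid_error_has_integral[of a b f f'] assms(1,2)
  have error: "((\<lambda>x. (x - (a + b) / 2) * f' x)
      has_integral (b - a) * ((f a + f b) / 2 - integral {a..b} f / (b - a))) {a..b}"
    by simp
  have "norm ((x - (a + b) / 2) * f' x) \<le> \<bar>x - (a + b) / 2\<bar> * w x" if "x \<in> {a..b}" for x
    using assms(3)[OF that] by (simp add: abs_mult mult_left_mono)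
  then have "norm (integral {a..b} (\<lambda>x. (x - (a + b) / 2) * f' x))
      \<le> integral {a..b} (\<lambda>x. \<bar>x - (a + b) / 2\<bar> * w x)"
    using error assms(4) by (intro integral_norm_bound_integral) auto
  then have "norm ((b - a) * ((f a + f b) / 2 - integral {a..b} f / (b - a))) \<le> W"
    using error assms(4) by (simp add: integral_unique)
  then show ?thesis using assms(1) by (simp add: abs_mult pos_le_divide_eq mult.commute)
qed

lemma s_alpha_m_convex_le_endpoints:
  assumes "s_alpha_m_convex s \<alpha> m D {a..b} g" "a < b" "b / m \<in> D" "x \<in> {a..b}"
  shows "g x \<le> rpow ((b - x) / (b - a)) (\<alpha> * s) * g a
    + m * (1 - rpow ((b - x) / (b - a)) (\<alpha> * s)) * g (b / m)"
proof -
  define t where "t = (b - x) / (b - a)"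
  have "t \<in> {0..1}" using assms(2,4) by (auto simp: t_def field_simps)
  moreover have "t * a + (1 - t) * b = b - t * (b - a)" by (simp add: algebra_simps)
  then have "t * a + (1 - t) * b = x" using assms(2) by (simp add: t_def)
  ultimately show ?thesis
    using assms(1-3) unfolding s_alpha_m_convex_def t_def[symmetric] by force
qed

theorem theorem1:
  fixes I :: "real set" and f f' :: "real \<Rightarrow> real" and a b s \<alpha> m :: real
  assumes "is_interval I"
    and "\<forall>x\<in>interior I. (f has_real_derivative f' x) (at x)"
    and "a \<in> interior I" and "b \<in> interior I" and "a < b"
    and "set_integrable lborel {a..b} f'"
    and "0 < s" and "s \<le> 1" and "0 \<le> \<alpha>" and "\<alpha> \<le> 1" and "0 < m" and "m \<le> 1"
    and "b / m \<in> interior I"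
    and "s_alpha_m_convex s \<alpha> m (interior I) {a..b} (\<lambda>x. \<bar>f' x\<bar>)"
  shows "\<bar>(f a + f b) / 2 - integral {a..b} f / (b - a)\<bar>
         \<le> (b - a) / 2 *
           ((1 + 2 powr (\<alpha> * s) * (\<alpha> * s)) / (2 powr (\<alpha> * s) * (\<alpha> * s + 1) * (\<alpha> * s + 2)) * \<bar>f' a\<bar>
            + m * (1 / 2 - (1 + 2 powr (\<alpha> * s) * (\<alpha> * s)) / (2 powr (\<alpha> * s) * (\<alpha> * s + 1) * (\<alpha> * s + 2)))
              * \<bar>f' (b / m)\<bar>)"
proof -
  define p where "p = \<alpha> * s"
  have "0 \<le> p" using assms(7,9) by (simp add: p_def)
  have "convex (interior I)" using assms(1) by (simp add: is_interval_convex_1 convex_interior)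
  then have ab_interior: "{a..b} \<subseteq> interior I"
    using assms(3,4) closed_segment_subset[of a "interior I" b] assms(5)
    by (simp add: closed_segment_eq_real_ivl)
  have "\<bar>(f a + f b) / 2 - integral {a..b} f / (b - a)\<bar>
      \<le> (b - a)^2 / 2 * (trapezoid_weight p * \<bar>f' a\<bar> + m * (1/2 - trapezoid_weight p) * \<bar>f' (b / m)\<bar>)
        / (b - a)"
  proof (rule trapezoid_error_le[OF assms(5)])
    show "(f has_real_derivative f' x) (at x within {a..b})" if "x \<in> {a..b}" for x
      using assms(2) ab_interior that by (blast intro: has_field_derivative_at_within)
    show "\<bar>f' x\<bar> \<le> rpow ((b - x) / (b - a)) p * \<bar>f' a\<bar>
        + m * (1 - rpow ((b - x) / (b - a)) p) * \<bar>f' (b / m)\<bar>" if "x \<in> {a..b}" for x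
      using s_alpha_m_convex_le_endpoints[OF assms(14,5,13) that] by (simp add: p_def)
  qed (rule convexity_bound_has_integral[OF assms(5) \<open>0 \<le> p\<close>])
  moreover have "(b - a)^2 / 2 * X / (b - a) = (b - a) / 2 * X" for X
    using assms(5) by (simp add: power2_eq_square field_simps)
  ultimately show ?thesis by (simp only: trapezoid_weight_def p_def)
qed

end
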